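(* Let $\mathcal{H}$ be a finite-dimensional Hilbert space, $\{\rho_\theta;\theta\in\Theta\subset\mathbb{R}^d\}$ a smooth family of density operators, and $\theta_0\in\Theta$ with $\rho=\rho_{\theta_0}$ strictly positive. The following conditions are equivalent: (i) $\operatorname{span}_{\mathbb{R}}\{\partial_i\rho\}_{i=1}^d$ is $\mathcal{D}_\rho$ invariant; (ii) $\operatorname{span}_{\mathbb{R}}\{L_i^{(S)}\}_{i=1}^d$ is $\mathcal{D}_\rho$ invariant; (ii)' $\operatorname{span}_{\mathbb{C}}\{L_i^{(S)}\}_{i=1}^d$ is $\mathcal{D}_\rho$ invariant; (iii) $\operatorname{span}_{\mathbb{C}}\{L_i^{(S)}\}_{i=1}^d=\operatorname{span}_{\mathbb{C}}\{L_i^{(\beta)}\}_{i=1}^d$ for every $\beta\in[0,1]$; (iv) $(J^{(\beta)}_{\theta_0})^{-1}=(J^{(S)}_{\theta_0})^{-1}(\operatorname{Re}Z+\beta\sqrt{-1}\operatorname{Im}Z)(J^{(S)}_{\theta_0})^{-1}$ for every $\beta\in[0,1]$, where $Z=[\operatorname{Tr}L_i^{(S)}\rho L_j^{(S)}]_{ij}$.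
   Context: $\partial_i\rho=\frac{\partial}{\partial\theta^i}\rho_\theta|_{\theta=\theta_0}$. The commutation operator $\mathcal{D}_\rho$ on $\mathcal{B}(\mathcal{H})$ is defined by $\mathcal{D}_\rho(X)\rho+\rho\mathcal{D}_\rho(X)=\sqrt{-1}(X\rho-\rho X)$; a subspace $W$ is $\mathcal{D}_\rho$ invariant if $\mathcal{D}_\rho(W)\subset W$. For $\beta\in[0,1]$, $L_i^{(\beta)}$ is defined by $\partial_i\rho=\frac{1+\beta}{2}\rho L_i^{(\beta)}+\frac{1-\beta}{2}L_i^{(\beta)}\rho$, with $L_i^{(S)}=L_i^{(0)}$ the SLDs (assumed linearly independent). With $\langle X,Y\rangle^{(\beta)}=\frac12\operatorname{Tr}X^*\{(1+\beta)\rho Y+(1-\beta)Y\rho\}$, $J^{(\beta)}_{\theta_0}=[\langle L_i^{(\beta)},L_j^{(\beta)}\rangle^{(\beta)}]_{ij}$ and $J^{(S)}_{\theta_0}=J^{(0)}_{\theta_0}$. Re, Im entrywise. *)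

theory Defs
  imports "HOL-Analysis.Analysis"
begin

definition cscale :: "complex \<Rightarrow> complex^'n^'m \<Rightarrow> complex^'n^'m" where
  "cscale c A = (\<chi> i j. c * A $ i $ j)"

definition adjoint :: "complex^'n^'m \<Rightarrow> complex^'m^'n" where
  "adjoint A = (\<chi> i j. cnj (A $ j $ i))"

definition hermitian :: "complex^'n^'n \<Rightarrow> bool" where
  "hermitian A \<longleftrightarrow> adjoint A = A"

definition qform :: "complex^'n^'n \<Rightarrow> complex^'n \<Rightarrow> complex" where
  "qform A x = (\<Sum>i\<in>UNIV. cnj (x $ i) * (A *v x) $ i)"

definition density_op :: "complex^'n^'n \<Rightarrow> bool" where
  "density_op A \<longleftrightarrow> hermitian A \<and> (\<forall>x. 0 \<le> Re (qform A x)) \<and> trace A = 1"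

definition strictly_positive :: "complex^'n^'n \<Rightarrow> bool" where
  "strictly_positive A \<longleftrightarrow> hermitian A \<and> (\<forall>x. x \<noteq> 0 \<longrightarrow> 0 < Re (qform A x))"

definition pderiv_op :: "(real^'d \<Rightarrow> complex^'n^'n) \<Rightarrow> real^'d \<Rightarrow> 'd \<Rightarrow> complex^'n^'n" where
  "pderiv_op rf th0 i = frechet_derivative rf (at th0) (axis i 1)"

definition comm_op :: "complex^'n^'n \<Rightarrow> complex^'n^'n \<Rightarrow> complex^'n^'n" where
  "comm_op rho X = (THE Y. Y ** rho + rho ** Y = cscale \<i> (X ** rho - rho ** X))"

definition D_invariant :: "complex^'n^'n \<Rightarrow> (complex^'n^'n) set \<Rightarrow> bool" where
  "D_invariant rho W \<longleftrightarrow> comm_op rho ` W \<subseteq> W"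

definition cspan :: "(complex^'n^'m) set \<Rightarrow> (complex^'n^'m) set" where
  "cspan S = module.span cscale S"

definition Lbeta :: "real \<Rightarrow> complex^'n^'n \<Rightarrow> complex^'n^'n \<Rightarrow> complex^'n^'n" where
  "Lbeta b rho dr = (THE L. dr = ((1 + b) / 2) *\<^sub>R (rho ** L) + ((1 - b) / 2) *\<^sub>R (L ** rho))"

definition inner_beta :: "real \<Rightarrow> complex^'n^'n \<Rightarrow> complex^'n^'n \<Rightarrow> complex^'n^'n \<Rightarrow> complex" where
  "inner_beta b rho X Y =
     (1/2) * trace (adjoint X ** ((1 + b) *\<^sub>R (rho ** Y) + (1 - b) *\<^sub>R (Y ** rho)))"

definition Jbeta :: "real \<Rightarrow> complex^'n^'n \<Rightarrow> ('d \<Rightarrow> complex^'n^'n) \<Rightarrow> complex^'d^'d" where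
  "Jbeta b rho dr = (\<chi> i j. inner_beta b rho (Lbeta b rho (dr i)) (Lbeta b rho (dr j)))"

definition Re_mat :: "complex^'d^'d \<Rightarrow> complex^'d^'d" where
  "Re_mat Z = (\<chi> i j. complex_of_real (Re (Z $ i $ j)))"

definition Im_mat :: "complex^'d^'d \<Rightarrow> complex^'d^'d" where
  "Im_mat Z = (\<chi> i j. complex_of_real (Im (Z $ i $ j)))"

end

theory Submission
  imports Defs
begin

text \<open>
  Write \<open>S Y = (\<rho>Y + Y\<rho>)/2\<close> and \<open>T\<^sub>\<beta> Y = ((1+\<beta>)\<rho>Y + (1-\<beta>)Y\<rho>)/2\<close>, so that the
  SLDs are \<open>L\<^sub>i = S\<^sup>-\<^sup>1(\<partial>\<^sub>i\<rho>)\<close> and \<open>L\<^sup>\<beta>\<^sub>i = T\<^sub>\<beta>\<^sup>-\<^sup>1(\<partial>\<^sub>i\<rho>)\<close>. Positivity of \<open>\<rho>\<close>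
  makes every \<open>T\<^sub>\<beta>\<close> injective; \<open>S\<close> commutes with \<open>D = D\<^sub>\<rho>\<close>, and the defining
  equation of \<open>D\<close> gives \<open>T\<^sub>\<beta> = S \<circ> (I + i\<beta>D)\<close>, i.e. \<open>L\<^sub>i = (I + i\<beta>D) L\<^sup>\<beta>\<^sub>i\<close>.

  (i)\<open>\<Leftrightarrow>\<close>(ii): \<open>S\<close> maps the real span of the \<open>L\<^sub>i\<close> onto that of the \<open>\<partial>\<^sub>i\<rho>\<close> and
  intertwines \<open>D\<close>. (ii)\<open>\<Leftrightarrow>\<close>(ii)': \<open>D\<close> preserves hermiticity, and a Hermitian element
  of the complex span of the \<open>L\<^sub>i\<close> lies in their real span, as the \<open>L\<^sub>i\<close> are Hermitian
  and real-independent. (ii)'\<open>\<Rightarrow>\<close>(iii): \<open>I + i\<beta>D\<close> is an injective endomorphism of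
  the complex span of the \<open>L\<^sub>i\<close>, hence onto, and maps \<open>L\<^sup>\<beta>\<^sub>i\<close> to \<open>L\<^sub>i\<close>.
  (iii)\<open>\<Rightarrow>\<close>(ii)': for \<open>\<beta> = 1\<close>, \<open>I + iD\<close> maps the complex span of the \<open>L\<^sup>1\<^sub>i\<close>,
  which is that of the \<open>L\<^sub>i\<close>, into itself, hence so does \<open>D\<close>.

  (iv): with \<open>G\<^sub>\<beta>(X,Y) = Tr X\<^sup>* T\<^sub>\<beta>Y\<close>, \<open>J\<^sup>\<beta>\<close> is the \<open>G\<^sub>\<beta>\<close>-Gram matrix of the
  \<open>L\<^sup>\<beta>\<^sub>i\<close>, and \<open>G\<^sub>\<beta>(L\<^sub>k, L\<^sub>l) = Re Z\<^sub>k\<^sub>l + i\<beta> Im Z\<^sub>k\<^sub>l\<close>. So \<open>(J\<^sup>\<beta>)\<^sup>-\<^sup>1\<close> is the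
  \<open>G\<^sub>\<beta>\<close>-Gram matrix of the \<open>G\<^sub>\<beta>\<close>-dual basis \<open>Y\<^sub>i\<close> of the \<open>L\<^sup>\<beta>\<^sub>i\<close>, while the
  right-hand side of (iv) is the \<open>G\<^sub>\<beta>\<close>-Gram matrix of the \<open>G\<^sub>0\<close>-dual basis \<open>X\<^sub>i\<close> of
  the \<open>L\<^sub>i\<close>. Since \<open>G\<^sub>\<beta>(X, L\<^sup>\<beta>\<^sub>j) = G\<^sub>0(X, L\<^sub>j)\<close>, every \<open>X\<^sub>i - Y\<^sub>i\<close> is
  \<open>G\<^sub>\<beta>\<close>-orthogonal to the span of the \<open>L\<^sup>\<beta>\<^sub>j\<close>, so the two matrices differ by the
  Gram matrix of the \<open>X\<^sub>i - Y\<^sub>i\<close>. It vanishes iff every \<open>X\<^sub>i\<close>, equivalently every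
  \<open>L\<^sub>i\<close>, lies in the complex span of the \<open>L\<^sup>\<beta>\<^sub>j\<close>, which reduces (iv) to (iii).
\<close>

lemma cscale_nth [simp]: "cscale c A $ i $ j = c * A $ i $ j"
  by (simp add: cscale_def)

lemma adjoint_nth [simp]: "adjoint A $ i $ j = cnj (A $ j $ i)"
  by (simp add: adjoint_def)

lemma matrix_mult_nth: "(A ** B) $ i $ j = (\<Sum>k\<in>UNIV. A $ i $ k * B $ k $ j)"
  by (simp add: matrix_matrix_mult_def)

lemma scaleR_matrix_nth [simp]: "(r *\<^sub>R (A::complex^'n^'m)) $ i $ j = of_real r * A $ i $ j"
  by (simp only: vector_scaleR_component) (simp add: scaleR_conv_of_real)

lemma adjoint_adjoint [simp]: "adjoint (adjoint A) = A"
  by (simp add: vec_eq_iff)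

lemma adjoint_zero [simp]: "adjoint 0 = 0"
  by (simp add: vec_eq_iff)

lemma adjoint_add: "adjoint (A + B) = adjoint A + adjoint B"
  by (simp add: vec_eq_iff)

lemma adjoint_diff: "adjoint (A - B) = adjoint A - adjoint B"
  by (simp add: vec_eq_iff)

lemma adjoint_scaleR: "adjoint (r *\<^sub>R A) = r *\<^sub>R adjoint A"
  by (simp add: vec_eq_iff)

lemma adjoint_cscale: "adjoint (cscale c A) = cscale (cnj c) (adjoint A)"
  by (simp add: vec_eq_iff)

lemma adjoint_mult: "adjoint (A ** B) = adjoint B ** adjoint A"
  by (simp add: vec_eq_iff matrix_mult_nth mult.commute)

lemma adjoint_sum: "adjoint (sum f S) = (\<Sum>x\<in>S. adjoint (f x))"
  by (induct S rule: infinite_finite_induct) (auto simp: adjoint_add)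

lemma cscale_add_right: "cscale c (A + B) = cscale c A + cscale c B"
  by (simp add: vec_eq_iff algebra_simps)

lemma cscale_add_left: "cscale (c + d) A = cscale c A + cscale d A"
  by (simp add: vec_eq_iff algebra_simps)

lemma cscale_diff_right: "cscale c (A - B) = cscale c A - cscale c B"
  by (simp add: vec_eq_iff algebra_simps)

lemma cscale_uminus_left: "cscale (- c) A = - cscale c A"
  by (simp add: vec_eq_iff)

lemma cscale_cscale [simp]: "cscale c (cscale d A) = cscale (c * d) A"
  by (simp add: vec_eq_iff)

lemma cscale_one [simp]: "cscale 1 A = A"
  by (simp add: vec_eq_iff)

lemma cscale_zero_left [simp]: "cscale 0 A = 0"
  by (simp add: vec_eq_iff)

lemma cscale_zero_right [simp]: "cscale c 0 = 0"
  by (simp add: vec_eq_iff)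

lemma cscale_of_real: "cscale (of_real r) A = r *\<^sub>R A"
  by (simp add: vec_eq_iff del: vector_scaleR_component)

lemma cscale_sum_right: "cscale c (sum f S) = (\<Sum>x\<in>S. cscale c (f x))"
  by (induct S rule: infinite_finite_induct) (auto simp: cscale_add_right)

lemma cscale_eq_Re_Im: "cscale c A = Re c *\<^sub>R A + cscale \<i> (Im c *\<^sub>R A)"
proof -
  have "c * z = Re c *\<^sub>R z + Im c *\<^sub>R (\<i> * z)" for z
    by (simp add: complex_eq_iff)
  then show ?thesis
    by (simp add: vec_eq_iff)
qed

lemma cscale_i_eq_0_iff: "cscale \<i> X = 0 \<longleftrightarrow> X = 0"
  by (auto simp: vec_eq_iff)

lemma matrix_mult_cscale_left: "cscale c A ** B = cscale c (A ** B)"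
  by (simp add: vec_eq_iff matrix_mult_nth sum_distrib_left mult.assoc)

lemma matrix_mult_cscale_right: "A ** cscale c B = cscale c (A ** B)"
  by (simp add: vec_eq_iff matrix_mult_nth sum_distrib_left mult_ac)

lemma matrix_add_rdistrib: "(A + B) ** C = A ** C + B ** (C::'a::semiring_1^_^_)"
  by (vector matrix_matrix_mult_def sum.distrib[symmetric] field_simps)

lemma matrix_diff_ldistrib: "A ** (B - C) = A ** B - A ** (C::'a::ring_1^_^_)"
  by (vector matrix_matrix_mult_def sum_subtractf[symmetric] field_simps)

lemma matrix_diff_rdistrib: "(A - B) ** C = A ** C - B ** (C::'a::ring_1^_^_)"
  by (vector matrix_matrix_mult_def sum_subtractf[symmetric] field_simps)

lemma matrix_mult_scaleR_left: "(r *\<^sub>R A) ** B = r *\<^sub>R (A ** (B::complex^_^_))"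
  by (simp add: scalar_matrix_assoc)

lemma matrix_mult_scaleR_right: "A ** (r *\<^sub>R B) = r *\<^sub>R (A ** (B::complex^_^_))"
  by (simp add: matrix_scalar_ac scalar_matrix_assoc)

lemma matrix_vector_mult_column: "A *v column i B = column i (A ** B)"
  by (simp add: vec_eq_iff matrix_vector_mult_def matrix_matrix_mult_def column_def)

lemma column_mat_1: "column i (mat 1 :: 'a::zero_neq_one^'n^'n) = axis i 1"
  by (simp add: vec_eq_iff mat_def axis_def column_def)

lemma trace_cscale: "trace (cscale c A) = c * trace A"
  by (simp add: trace_def sum_distrib_left)

lemma trace_scaleR: "trace (r *\<^sub>R (A::complex^'n^'n)) = of_real r * trace A"
  by (simp add: trace_def sum_distrib_left del: vector_scaleR_component)

lemma trace_zero [simp]: "trace 0 = 0"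
  by (simp add: trace_def)

lemma trace_adjoint: "trace (adjoint A) = cnj (trace A)"
  by (simp add: trace_def)

lemma matrix_inv_mult:
  "invertible A \<Longrightarrow> A ** matrix_inv A = mat 1 \<and> matrix_inv A ** A = mat 1"
  unfolding matrix_inv_def invertible_def by (rule someI_ex)

lemma matrix_inv_unique_left:
  assumes "B ** A = mat 1" "invertible A"
  shows "B = matrix_inv A"
proof -
  have "B = B ** (A ** matrix_inv A)"
    using matrix_inv_mult[OF assms(2)] by simp
  also have "\<dots> = matrix_inv A"
    by (simp add: matrix_mul_assoc assms(1))
  finally show ?thesis .
qed

lemma invertible_if_ker_trivial:
  "(\<forall>x. A *v x = 0 \<longrightarrow> x = 0) \<Longrightarrow> invertible (A::'a::field^'n^'n)"
  using matrix_left_invertible_ker invertible_left_inverse by blast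

lemma adjoint_matrix_inv:
  assumes "adjoint A = A" "invertible A"
  shows "adjoint (matrix_inv A) = matrix_inv A"
proof (rule matrix_inv_unique_left[OF _ assms(2)])
  have "adjoint (matrix_inv A) ** A = adjoint (A ** matrix_inv A)"
    by (simp add: adjoint_mult assms(1))
  then show "adjoint (matrix_inv A) ** A = mat 1"
    using matrix_inv_mult[OF assms(2)] by (simp add: vec_eq_iff mat_def)
qed

interpretation cscale_module: module "cscale :: complex \<Rightarrow> complex^'n^'m \<Rightarrow> complex^'n^'m"
  by unfold_locales (simp_all add: cscale_add_right cscale_add_left)

lemma (in module) span_range_finite:
  assumes "finite (UNIV::'i set)"
  shows "span (range (f::'i \<Rightarrow> 'b)) = range (\<lambda>c. \<Sum>i\<in>UNIV. scale (c i) (f i))"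
proof
  show "range (\<lambda>c. \<Sum>i\<in>UNIV. scale (c i) (f i)) \<subseteq> span (range f)"
    by (clarsimp, intro span_sum span_scale span_base) simp
  show "span (range f) \<subseteq> range (\<lambda>c. \<Sum>i\<in>UNIV. scale (c i) (f i))"
  proof
    fix x assume "x \<in> span (range f)"
    then show "x \<in> range (\<lambda>c. \<Sum>i\<in>UNIV. scale (c i) (f i))"
    proof (induction rule: span_induct_alt)
      case base
      have "0 = (\<Sum>i\<in>UNIV. scale (0::'a) (f i))"
        by simp
      then show ?case
        by (rule range_eqI[where x="\<lambda>i. 0"])
    next
      case (step c x y)
      obtain j where j: "x = f j"
        using step.hyps by blast
      obtain d where d: "y = (\<Sum>i\<in>UNIV. scale (d i) (f i))"
        using step.IH by blast
      have "(\<Sum>i\<in>UNIV. scale (if i = j then c else 0) (f i)) = scale c x"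
        using assms by (simp add: j if_distrib[of "\<lambda>a. scale a _"] cong: if_cong)
      then have "scale c x + y = (\<Sum>i\<in>UNIV. scale ((if i = j then c else 0) + d i) (f i))"
        by (simp add: d scale_left_distrib sum.distrib)
      then show ?case
        by (rule range_eqI[where x="\<lambda>i. (if i = j then c else 0) + d i"])
    qed
  qed
qed

lemma span_range_finite:
  "span (range (f::'i::finite \<Rightarrow> 'a::real_vector)) = range (\<lambda>c. \<Sum>i\<in>UNIV. c i *\<^sub>R f i)"
  by (rule real_vector.span_range_finite) simp

lemma cspan_range_finite:
  "cspan (range (f::'i::finite \<Rightarrow> complex^'n^'m)) = range (\<lambda>c. \<Sum>i\<in>UNIV. cscale (c i) (f i))"
  unfolding cspan_def by (rule cscale_module.span_range_finite) simp

lemma cspan_base: "x \<in> A \<Longrightarrow> x \<in> cspan A"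
  unfolding cspan_def by (rule cscale_module.span_base)

lemma cspan_diff: "x \<in> cspan A \<Longrightarrow> y \<in> cspan A \<Longrightarrow> x - y \<in> cspan A"
  unfolding cspan_def by (rule cscale_module.span_diff)

lemma cspan_cscale: "x \<in> cspan A \<Longrightarrow> cscale c x \<in> cspan A"
  unfolding cspan_def by (rule cscale_module.span_scale)

lemma cspan_lin_comb: "(\<And>i. f i \<in> cspan A) \<Longrightarrow> (\<Sum>i\<in>UNIV. cscale (c i) (f i)) \<in> cspan A"
  unfolding cspan_def by (intro cscale_module.span_sum cscale_module.span_scale) auto

lemma cspan_range_subset: "(\<And>i. f i \<in> cspan (range g)) \<Longrightarrow> cspan (range f) \<subseteq> cspan (range g)"
  unfolding cspan_def by (rule cscale_module.span_minimal) (auto simp: cspan_def)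

section \<open>The Hilbert--Schmidt inner product and the maps \<open>Y \<mapsto> a \<rho> Y + b Y \<rho>\<close>\<close>

definition hs_inner :: "complex^'n^'m \<Rightarrow> complex^'n^'m \<Rightarrow> complex" where
  "hs_inner X Y = trace (adjoint X ** Y)"

lemma hs_inner_zero_left [simp]: "hs_inner 0 Y = 0"
  by (simp add: hs_inner_def)

lemma hs_inner_zero_right [simp]: "hs_inner X 0 = 0"
  by (simp add: hs_inner_def)

lemma hs_inner_add_left: "hs_inner (X + X') Y = hs_inner X Y + hs_inner X' Y"
  by (simp add: hs_inner_def adjoint_add matrix_add_rdistrib trace_add)

lemma hs_inner_add_right: "hs_inner X (Y + Y') = hs_inner X Y + hs_inner X Y'"
  by (simp add: hs_inner_def matrix_add_ldistrib trace_add)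

lemma hs_inner_diff_left: "hs_inner (X - X') Y = hs_inner X Y - hs_inner X' Y"
  by (simp add: hs_inner_def adjoint_diff matrix_diff_rdistrib trace_sub)

lemma hs_inner_cscale_left: "hs_inner (cscale c X) Y = cnj c * hs_inner X Y"
  by (simp add: hs_inner_def adjoint_cscale matrix_mult_cscale_left trace_cscale)

lemma hs_inner_cscale_right: "hs_inner X (cscale c Y) = c * hs_inner X Y"
  by (simp add: hs_inner_def matrix_mult_cscale_right trace_cscale)

lemma hs_inner_sum_left: "hs_inner (sum f S) Y = (\<Sum>x\<in>S. hs_inner (f x) Y)"
  by (induct S rule: infinite_finite_induct) (auto simp: hs_inner_add_left)

lemma hs_inner_sum_right: "hs_inner X (sum f S) = (\<Sum>x\<in>S. hs_inner X (f x))"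
  by (induct S rule: infinite_finite_induct) (auto simp: hs_inner_add_right)

lemma hs_inner_commute: "hs_inner Y X = cnj (hs_inner X Y)"
  by (simp add: hs_inner_def flip: trace_adjoint) (simp add: adjoint_mult)

definition lr_mult :: "complex^'n^'n \<Rightarrow> real \<Rightarrow> real \<Rightarrow> complex^'n^'n \<Rightarrow> complex^'n^'n" where
  "lr_mult rho a b Y = a *\<^sub>R (rho ** Y) + b *\<^sub>R (Y ** rho)"

lemma lr_mult_zero [simp]: "lr_mult rho a b 0 = 0"
  by (simp add: lr_mult_def)

lemma lr_mult_add: "lr_mult rho a b (X + Y) = lr_mult rho a b X + lr_mult rho a b Y"
  by (simp add: lr_mult_def matrix_add_ldistrib matrix_add_rdistrib scaleR_add_right)

lemma lr_mult_diff: "lr_mult rho a b (X - Y) = lr_mult rho a b X - lr_mult rho a b Y"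
  by (simp add: lr_mult_def matrix_diff_ldistrib matrix_diff_rdistrib scaleR_diff_right)

lemma lr_mult_scaleR: "lr_mult rho a b (r *\<^sub>R X) = r *\<^sub>R lr_mult rho a b X"
  by (simp add: lr_mult_def matrix_mult_scaleR_right matrix_mult_scaleR_left
      scaleR_add_right mult.commute)

lemma lr_mult_cscale: "lr_mult rho a b (cscale c X) = cscale c (lr_mult rho a b X)"
  by (simp add: lr_mult_def matrix_mult_cscale_right matrix_mult_cscale_left
      cscale_add_right mult.commute flip: cscale_of_real)

lemma linear_lr_mult: "linear (lr_mult rho a b)"
  by (rule linearI) (simp_all add: lr_mult_add lr_mult_scaleR)

lemma lr_mult_sum: "lr_mult rho a b (sum f S) = (\<Sum>x\<in>S. lr_mult rho a b (f x))"
  by (rule linear_sum[OF linear_lr_mult])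

lemma lr_mult_mult_left: "lr_mult rho a b (rho ** X) = rho ** lr_mult rho a b X"
  by (simp add: lr_mult_def matrix_add_ldistrib matrix_mult_scaleR_right matrix_mul_assoc)

lemma lr_mult_mult_right: "lr_mult rho a b (X ** rho) = lr_mult rho a b X ** rho"
  by (simp add: lr_mult_def matrix_add_rdistrib matrix_mult_scaleR_left matrix_mul_assoc)

lemma lr_mult_commute: "lr_mult rho a b (lr_mult rho c d X) = lr_mult rho c d (lr_mult rho a b X)"
  by (simp add: lr_mult_def matrix_add_ldistrib matrix_add_rdistrib matrix_mult_scaleR_right
      matrix_mult_scaleR_left matrix_mul_assoc algebra_simps)

lemma lr_mult_1_1: "lr_mult rho 1 1 Y = 2 *\<^sub>R lr_mult rho (1/2) (1/2) Y"
  by (simp add: lr_mult_def scaleR_add_right)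

locale pos_def_op =
  fixes rho :: "complex^'n^'n"
  assumes rho_hermitian: "hermitian rho"
    and rho_pos: "\<And>x. x \<noteq> 0 \<Longrightarrow> 0 < Re (qform rho x)"
begin

lemma adjoint_rho [simp]: "adjoint rho = rho"
  using rho_hermitian by (simp add: hermitian_def)

lemma adjoint_lr_mult: "adjoint (lr_mult rho a b Y) = lr_mult rho b a (adjoint Y)"
  by (simp add: lr_mult_def adjoint_add adjoint_scaleR adjoint_mult add.commute)

lemma hs_inner_lr_mult_swap: "hs_inner X (lr_mult rho a b Y) = hs_inner (lr_mult rho a b X) Y"
proof -
  have "trace (rho ** adjoint X ** Y) = trace (adjoint X ** Y ** rho)"
    by (metis matrix_mul_assoc trace_mul_sym)
  then show ?thesis
    by (simp add: hs_inner_def lr_mult_def adjoint_add adjoint_scaleR adjoint_mult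
        matrix_add_ldistrib matrix_add_rdistrib matrix_mult_scaleR_right matrix_mult_scaleR_left
        trace_add trace_scaleR matrix_mul_assoc)
qed

lemma trace_sandwich_eq_sum_qform:
  "trace (adjoint Y ** rho ** Y) = (\<Sum>k\<in>UNIV. qform rho (column k Y))"
proof -
  have "trace (adjoint Y ** rho ** Y)
      = (\<Sum>k\<in>UNIV. \<Sum>l\<in>UNIV. \<Sum>i\<in>UNIV. cnj (Y$i$k) * rho$i$l * Y$l$k)"
    by (simp add: trace_def matrix_mult_nth sum_distrib_right)
  also have "\<dots> = (\<Sum>k\<in>UNIV. \<Sum>i\<in>UNIV. \<Sum>l\<in>UNIV. cnj (Y$i$k) * rho$i$l * Y$l$k)"
    by (rule sum.cong[OF refl], rule sum.swap)
  also have "\<dots> = (\<Sum>k\<in>UNIV. qform rho (column k Y))"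
    by (simp add: qform_def matrix_vector_mult_def column_def sum_distrib_left mult.assoc)
  finally show ?thesis .
qed

lemma Re_trace_sandwich_pos:
  assumes "Y \<noteq> 0"
  shows "0 < Re (trace (adjoint Y ** rho ** Y))"
proof -
  have nonneg: "0 \<le> Re (qform rho x)" for x
    using rho_pos[of x] by (cases "x = 0") (auto simp: qform_def)
  obtain k where "column k Y \<noteq> 0"
    using assms by (auto simp: vec_eq_iff column_def)
  then have "0 < Re (qform rho (column k Y))"
    by (rule rho_pos)
  then show ?thesis
    unfolding trace_sandwich_eq_sum_qform Re_sum
    by (intro sum_pos2[where i=k]) (auto intro: nonneg)
qed

lemma Re_hs_inner_lr_mult_pos:
  assumes "0 \<le> a" "0 \<le> b" "0 < a + b" "Y \<noteq> 0"
  shows "0 < Re (hs_inner Y (lr_mult rho a b Y))"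
proof -
  have "trace (adjoint Y ** (Y ** rho)) = trace (Y ** rho ** adjoint Y)"
    by (simp add: trace_mul_sym[of "adjoint Y"])
  then have "Re (hs_inner Y (lr_mult rho a b Y))
      = a * Re (trace (adjoint Y ** rho ** Y))
        + b * Re (trace (adjoint (adjoint Y) ** rho ** adjoint Y))"
    by (simp add: hs_inner_def lr_mult_def matrix_add_ldistrib trace_add
        matrix_mult_scaleR_right trace_scaleR matrix_mul_assoc)
  moreover have "0 < Re (trace (adjoint Y ** rho ** Y))"
    using assms(4) by (rule Re_trace_sandwich_pos)
  moreover have "0 < Re (trace (adjoint (adjoint Y) ** rho ** adjoint Y))"
    using assms(4) by (intro Re_trace_sandwich_pos) (metis adjoint_adjoint adjoint_zero)
  ultimately show ?thesis
    using assms(1-3) by (smt (verit) mult_nonneg_nonneg mult_pos_pos)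
qed

lemma lr_mult_inj:
  assumes "0 \<le> a" "0 \<le> b" "0 < a + b" "lr_mult rho a b X = lr_mult rho a b Y"
  shows "X = Y"
proof (rule ccontr)
  assume "X \<noteq> Y"
  then have "0 < Re (hs_inner (X - Y) (lr_mult rho a b (X - Y)))"
    using Re_hs_inner_lr_mult_pos[OF assms(1-3)] by simp
  then show False
    using assms(4) by (simp add: lr_mult_diff hs_inner_def)
qed

lemma lr_mult_ex1:
  assumes "0 \<le> a" "0 \<le> b" "0 < a + b"
  shows "\<exists>!Y. lr_mult rho a b Y = Z"
proof -
  have "inj (lr_mult rho a b)"
    using lr_mult_inj[OF assms] by (auto intro: injI)
  then have "surj (lr_mult rho a b)"
    using linear_injective_imp_surjective[OF linear_lr_mult] by blast
  then show ?thesis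
    using lr_mult_inj[OF assms] by (metis surjD)
qed

section \<open>The commutation operator and the \<open>\<beta>\<close>-logarithmic derivatives\<close>

abbreviation sym_mult :: "complex^'n^'n \<Rightarrow> complex^'n^'n" where
  "sym_mult \<equiv> lr_mult rho (1/2) (1/2)"

abbreviation beta_mult :: "real \<Rightarrow> complex^'n^'n \<Rightarrow> complex^'n^'n" where
  "beta_mult b \<equiv> lr_mult rho ((1+b)/2) ((1-b)/2)"

abbreviation D :: "complex^'n^'n \<Rightarrow> complex^'n^'n" where
  "D \<equiv> comm_op rho"

lemma beta_mult_coeffs:
  "0 \<le> (b::real) \<Longrightarrow> b \<le> 1 \<Longrightarrow> 0 \<le> (1+b)/2 \<and> 0 \<le> (1-b)/2 \<and> 0 < (1+b)/2 + (1-b)/2"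
  by (auto simp: field_simps)

lemma beta_mult_inj: "0 \<le> b \<Longrightarrow> b \<le> 1 \<Longrightarrow> beta_mult b X = beta_mult b Y \<Longrightarrow> X = Y"
  using beta_mult_coeffs[of b] lr_mult_inj by blast

lemma sym_mult_inj: "sym_mult X = sym_mult Y \<Longrightarrow> X = Y"
  using beta_mult_inj[of 0] by simp

text \<open>
  \<open>comm_op\<close> and \<open>Lbeta\<close> are defined by \<open>THE\<close>; they mean something only because
  \<open>lr_mult_ex1\<close> gives unique solvability.
\<close>

lemma comm_op_eq: "lr_mult rho 1 1 (D X) = cscale \<i> (X ** rho - rho ** X)"
proof -
  have "D X = (THE Y. lr_mult rho 1 1 Y = cscale \<i> (X ** rho - rho ** X))"
    unfolding comm_op_def lr_mult_def by (simp add: add.commute)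
  also have "lr_mult rho 1 1 \<dots> = cscale \<i> (X ** rho - rho ** X)"
    by (rule theI') (rule lr_mult_ex1, auto)
  finally show ?thesis .
qed

lemma comm_op_unique: "lr_mult rho 1 1 Y = cscale \<i> (X ** rho - rho ** X) \<Longrightarrow> D X = Y"
  using comm_op_eq by (metis lr_mult_inj zero_le_one zero_less_one add_pos_pos)

lemma sym_mult_comm_op: "sym_mult (D X) = cscale (\<i>/2) (X ** rho - rho ** X)"
proof -
  have "(1/2::real) *\<^sub>R (2 *\<^sub>R sym_mult (D X)) = (1/2::real) *\<^sub>R cscale \<i> (X ** rho - rho ** X)"
    using comm_op_eq lr_mult_1_1 by metis
  then show ?thesis
    by (simp flip: cscale_of_real)
qed

lemma comm_op_add: "D (X + Y) = D X + D Y"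
  by (rule comm_op_unique)
    (simp add: lr_mult_add comm_op_eq matrix_add_rdistrib matrix_add_ldistrib
      flip: cscale_add_right, simp add: algebra_simps)

lemma comm_op_cscale: "D (cscale c X) = cscale c (D X)"
  by (rule comm_op_unique)
    (simp add: lr_mult_cscale comm_op_eq matrix_mult_cscale_left matrix_mult_cscale_right
      cscale_diff_right mult.commute)

lemma comm_op_scaleR: "D (r *\<^sub>R X) = r *\<^sub>R D X"
  by (simp add: comm_op_cscale flip: cscale_of_real)

lemma linear_comm_op: "linear D"
  by (rule linearI) (simp_all add: comm_op_add comm_op_scaleR)

lemma comm_op_zero [simp]: "D 0 = 0"
  by (rule linear_0[OF linear_comm_op])

lemma comm_op_sum: "D (sum f A) = (\<Sum>x\<in>A. D (f x))"
  by (rule linear_sum[OF linear_comm_op])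

lemma comm_op_adjoint:
  assumes "adjoint X = X"
  shows "adjoint (D X) = D X"
proof -
  have "lr_mult rho 1 1 (adjoint (D X)) = adjoint (lr_mult rho 1 1 (D X))"
    by (simp add: adjoint_lr_mult)
  also have "\<dots> = cscale \<i> (X ** rho - rho ** X)"
    by (simp add: comm_op_eq adjoint_cscale adjoint_diff adjoint_mult assms cscale_diff_right
        cscale_uminus_left)
  finally show ?thesis
    by (rule comm_op_unique[symmetric])
qed

lemma comm_op_sym_mult: "D (sym_mult X) = sym_mult (D X)"
  by (rule comm_op_unique)
    (simp add: lr_mult_commute[of _ 1 1] comm_op_eq lr_mult_cscale lr_mult_diff
      lr_mult_mult_left lr_mult_mult_right)

definition id_plus_iD :: "real \<Rightarrow> complex^'n^'n \<Rightarrow> complex^'n^'n" where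
  "id_plus_iD b X = X + cscale (\<i> * of_real b) (D X)"

lemma beta_mult_eq_sym_mult_id_plus_iD: "beta_mult b X = sym_mult (id_plus_iD b X)"
proof -
  have "sym_mult (id_plus_iD b X)
      = sym_mult X + cscale (\<i> * of_real b) (cscale (\<i>/2) (X ** rho - rho ** X))"
    by (simp add: id_plus_iD_def lr_mult_add lr_mult_cscale sym_mult_comm_op)
  also have "\<dots> = beta_mult b X"
    by (simp add: lr_mult_def vec_eq_iff) (simp add: scaleR_conv_of_real field_simps)
  finally show ?thesis by simp
qed

lemma id_plus_iD_sum_cscale:
  "id_plus_iD b (\<Sum>i\<in>A. cscale (c i) (f i)) = (\<Sum>i\<in>A. cscale (c i) (id_plus_iD b (f i)))"
  by (simp add: id_plus_iD_def comm_op_sum comm_op_cscale cscale_add_right sum.distrib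
      cscale_sum_right mult.commute)

lemma id_plus_iD_eq_0:
  "0 \<le> b \<Longrightarrow> b \<le> 1 \<Longrightarrow> id_plus_iD b X = 0 \<Longrightarrow> X = 0"
  using beta_mult_inj[of b X 0] by (simp add: beta_mult_eq_sym_mult_id_plus_iD)

lemma Lbeta_eq: "0 \<le> b \<Longrightarrow> b \<le> 1 \<Longrightarrow> beta_mult b (Lbeta b rho Z) = Z"
  unfolding Lbeta_def lr_mult_def[symmetric] eq_commute[of Z]
  by (rule theI') (use beta_mult_coeffs[of b] lr_mult_ex1 in blast)

lemma Lbeta_unique: "0 \<le> b \<Longrightarrow> b \<le> 1 \<Longrightarrow> beta_mult b L = Z \<Longrightarrow> Lbeta b rho Z = L"
  using Lbeta_eq beta_mult_inj by metis

lemma sym_mult_SLD: "sym_mult (Lbeta 0 rho Z) = Z"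
  using Lbeta_eq[of 0 Z] by simp

lemma id_plus_iD_Lbeta: "0 \<le> b \<Longrightarrow> b \<le> 1 \<Longrightarrow> id_plus_iD b (Lbeta b rho Z) = Lbeta 0 rho Z"
  by (rule sym_mult_inj) (simp add: sym_mult_SLD Lbeta_eq flip: beta_mult_eq_sym_mult_id_plus_iD)

lemma adjoint_SLD: "adjoint Z = Z \<Longrightarrow> adjoint (Lbeta 0 rho Z) = Lbeta 0 rho Z"
  by (rule sym_mult_inj) (metis adjoint_lr_mult sym_mult_SLD)

end

section \<open>Spans of the logarithmic derivatives\<close>

locale SLD_family = pos_def_op rho for rho :: "complex^'n^'n" +
  fixes dr :: "'d::finite \<Rightarrow> complex^'n^'n"
  assumes adjoint_dr: "\<And>i. adjoint (dr i) = dr i"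
    and SLD_independent: "\<And>c::'d \<Rightarrow> real. (\<Sum>i\<in>UNIV. c i *\<^sub>R Lbeta 0 rho (dr i)) = 0 \<Longrightarrow> c i = 0"
begin

abbreviation Lb :: "real \<Rightarrow> 'd \<Rightarrow> complex^'n^'n" where
  "Lb b i \<equiv> Lbeta b rho (dr i)"

abbreviation L :: "'d \<Rightarrow> complex^'n^'n" where
  "L i \<equiv> Lbeta 0 rho (dr i)"

definition Lb_comb :: "real \<Rightarrow> complex^'d \<Rightarrow> complex^'n^'n" where
  "Lb_comb b v = (\<Sum>i\<in>UNIV. cscale (v$i) (Lb b i))"

abbreviation SLD_span :: "(complex^'n^'n) set" where
  "SLD_span \<equiv> span (range L)"

abbreviation SLD_cspan :: "(complex^'n^'n) set" where
  "SLD_cspan \<equiv> cspan (range L)"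

lemma adjoint_L: "adjoint (L i) = L i"
  using adjoint_SLD adjoint_dr by blast

lemma cspan_Lb_eq: "cspan (range (Lb b)) = range (Lb_comb b)"
proof -
  have "surj (vec_lambda :: ('d \<Rightarrow> complex) \<Rightarrow> complex^'d)"
    by (rule surjI[of _ vec_nth]) simp
  then have "range (Lb_comb b) = range (Lb_comb b \<circ> vec_lambda)"
    using image_comp[of "Lb_comb b" vec_lambda UNIV] by simp
  then show ?thesis
    unfolding cspan_range_finite by (simp add: Lb_comb_def comp_def)
qed

lemma Lb_comb_in_cspan: "Lb_comb b v \<in> cspan (range (Lb b))"
  using cspan_Lb_eq by blast

lemma L_in_SLD_cspan: "L i \<in> SLD_cspan"
  by (rule cspan_base) auto

lemma Lb_comb_zero [simp]: "Lb_comb b 0 = 0"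
  by (simp add: Lb_comb_def)

lemma Lb_comb_add: "Lb_comb b (v + w) = Lb_comb b v + Lb_comb b w"
  by (simp add: Lb_comb_def cscale_add_left sum.distrib)

lemma Lb_comb_scale: "Lb_comb b (c *s v) = cscale c (Lb_comb b v)"
  by (simp add: Lb_comb_def cscale_sum_right)

lemma Lb_comb_axis: "Lb_comb b (axis j 1) = Lb b j"
proof -
  have "Lb_comb b (axis j 1) = (\<Sum>i\<in>UNIV. if i = j then Lb b j else 0)"
    unfolding Lb_comb_def by (rule sum.cong) (auto simp: axis_def)
  then show ?thesis by simp
qed

lemma Lb_comb_sum: "Lb_comb b (sum f S) = (\<Sum>x\<in>S. Lb_comb b (f x))"
  by (induct S rule: infinite_finite_induct) (auto simp: Lb_comb_add)

lemma Lb_comb_matrix_vector_mult: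
  "Lb_comb b (A *v v) = (\<Sum>j\<in>UNIV. cscale (v$j) (Lb_comb b (column j A)))"
  by (simp add: matrix_mult_sum Lb_comb_sum Lb_comb_scale)

lemma id_plus_iD_Lb_comb: "0 \<le> b \<Longrightarrow> b \<le> 1 \<Longrightarrow> id_plus_iD b (Lb_comb b v) = Lb_comb 0 v"
  by (simp add: Lb_comb_def id_plus_iD_sum_cscale id_plus_iD_Lbeta)

definition Re_comb :: "complex^'d \<Rightarrow> complex^'n^'n" where
  "Re_comb v = (\<Sum>i\<in>UNIV. Re (v$i) *\<^sub>R L i)"

definition Im_comb :: "complex^'d \<Rightarrow> complex^'n^'n" where
  "Im_comb v = (\<Sum>i\<in>UNIV. Im (v$i) *\<^sub>R L i)"

lemma Lb_comb_0_eq_Re_Im: "Lb_comb 0 v = Re_comb v + cscale \<i> (Im_comb v)"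
  unfolding Lb_comb_def Re_comb_def Im_comb_def
  by (subst cscale_eq_Re_Im) (simp add: sum.distrib cscale_sum_right)

lemma adjoint_Lb_comb_0: "adjoint (Lb_comb 0 v) = Re_comb v - cscale \<i> (Im_comb v)"
  by (simp add: Lb_comb_0_eq_Re_Im adjoint_add adjoint_cscale cscale_uminus_left
      Re_comb_def Im_comb_def adjoint_sum adjoint_scaleR adjoint_L)

lemma Im_comb_eq_0_if_hermitian:
  assumes "adjoint (Lb_comb 0 v) = Lb_comb 0 v"
  shows "Im_comb v = 0"
proof -
  have "(2::real) *\<^sub>R cscale \<i> (Im_comb v) = Lb_comb 0 v - adjoint (Lb_comb 0 v)"
    unfolding adjoint_Lb_comb_0 unfolding Lb_comb_0_eq_Re_Im by (simp add: scaleR_2)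
  then show ?thesis
    using assms by (simp add: cscale_i_eq_0_iff)
qed

lemma SLD_complex_independent: "Lb_comb 0 v = 0 \<Longrightarrow> v = 0"
proof -
  assume v: "Lb_comb 0 v = 0"
  then have im: "Im_comb v = 0"
    by (intro Im_comb_eq_0_if_hermitian) simp
  with v have re: "Re_comb v = 0"
    by (simp add: Lb_comb_0_eq_Re_Im)
  have "Re (v$i) = 0" "Im (v$i) = 0" for i
    using SLD_independent[OF re[unfolded Re_comb_def]] SLD_independent[OF im[unfolded Im_comb_def]]
    by simp_all
  then show "v = 0"
    by (simp add: vec_eq_iff complex_eq_iff)
qed

lemma Lb_complex_independent:
  assumes "0 \<le> b" "b \<le> 1" "Lb_comb b v = 0"
  shows "v = 0"
  using id_plus_iD_Lb_comb[OF assms(1,2), of v] assms(3) SLD_complex_independent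
  by (simp add: id_plus_iD_def)

lemma hermitian_in_SLD_cspan_imp_in_SLD_span:
  assumes "X \<in> SLD_cspan" "adjoint X = X"
  shows "X \<in> SLD_span"
proof -
  obtain v where v: "X = Lb_comb 0 v"
    using assms(1) cspan_Lb_eq by auto
  have "Im_comb v = 0"
    using assms(2) by (intro Im_comb_eq_0_if_hermitian) (simp add: v)
  then have "X = Re_comb v"
    by (simp add: v Lb_comb_0_eq_Re_Im)
  then show ?thesis
    unfolding Re_comb_def by (simp only:) (intro span_sum span_scale span_base rangeI)
qed

lemma SLD_span_subset_SLD_cspan: "SLD_span \<subseteq> SLD_cspan"
proof
  fix X assume "X \<in> SLD_span"
  then obtain c where "X = (\<Sum>i\<in>UNIV. c i *\<^sub>R L i)"
    unfolding span_range_finite by blast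
  then have "X = (\<Sum>i\<in>UNIV. cscale (of_real (c i)) (L i))"
    by (simp add: cscale_of_real)
  then show "X \<in> SLD_cspan"
    by (simp add: cspan_lin_comb L_in_SLD_cspan)
qed

lemma span_dr_eq: "span (range dr) = sym_mult ` SLD_span"
proof -
  have "range dr = sym_mult ` range L"
    by (auto simp: sym_mult_SLD image_iff)
  then show ?thesis
    by (simp add: real_vector.linear_span_image linear_lr_mult)
qed

lemma D_invariant_span_dr_iff: "D_invariant rho (span (range dr)) \<longleftrightarrow> D_invariant rho SLD_span"
proof -
  have "D (sym_mult Y) \<in> sym_mult ` SLD_span \<longleftrightarrow> D Y \<in> SLD_span" for Y
    using sym_mult_inj by (auto simp: comm_op_sym_mult)
  then show ?thesis
    unfolding D_invariant_def span_dr_eq by blast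
qed

lemma D_invariant_SLD_cspan_iff_comm_op_L: "D_invariant rho SLD_cspan \<longleftrightarrow> (\<forall>i. D (L i) \<in> SLD_cspan)"
proof
  assume "\<forall>i. D (L i) \<in> SLD_cspan"
  then have "D (Lb_comb 0 v) \<in> SLD_cspan" for v
    unfolding Lb_comb_def comm_op_sum comm_op_cscale by (intro cspan_lin_comb) auto
  then show "D_invariant rho SLD_cspan"
    unfolding D_invariant_def cspan_Lb_eq by auto
qed (auto simp: D_invariant_def L_in_SLD_cspan)

lemma D_invariant_SLD_span_iff_SLD_cspan: "D_invariant rho SLD_span \<longleftrightarrow> D_invariant rho SLD_cspan"
proof
  assume "D_invariant rho SLD_span"
  then have "D (L i) \<in> SLD_cspan" for i
    using SLD_span_subset_SLD_cspan span_base[OF rangeI, of L i] unfolding D_invariant_def by blast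
  then show "D_invariant rho SLD_cspan"
    by (simp add: D_invariant_SLD_cspan_iff_comm_op_L)
next
  assume "D_invariant rho SLD_cspan"
  then have "D (L i) \<in> SLD_span" for i
    using hermitian_in_SLD_cspan_imp_in_SLD_span comm_op_adjoint adjoint_L
    by (auto simp: D_invariant_SLD_cspan_iff_comm_op_L)
  then have "span (D ` range L) \<subseteq> SLD_span"
    by (intro real_vector.span_minimal real_vector.subspace_span) auto
  then show "D_invariant rho SLD_span"
    by (simp add: D_invariant_def real_vector.linear_span_image[OF linear_comm_op])
qed

lemma D_invariant_if_L_in_cspan_Lb:
  assumes "0 < b" "b \<le> 1" "\<And>j. L j \<in> cspan (range (Lb b))"
  shows "D_invariant rho SLD_cspan"
  unfolding D_invariant_SLD_cspan_iff_comm_op_L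
proof
  fix j
  obtain v where v: "L j = Lb_comb b v"
    using assms(3) cspan_Lb_eq by blast
  have "id_plus_iD b (L j) \<in> SLD_cspan"
    using assms(1,2) by (simp add: v id_plus_iD_Lb_comb cspan_Lb_eq)
  then have "cscale (inverse (\<i> * of_real b)) (id_plus_iD b (L j) - L j) \<in> SLD_cspan"
    by (intro cspan_cscale cspan_diff L_in_SLD_cspan)
  moreover have nz: "\<i> * complex_of_real b \<noteq> 0"
    using assms(1) by simp
  then have "cscale (inverse (\<i> * of_real b)) (id_plus_iD b (L j) - L j) = D (L j)"
    by (simp only: id_plus_iD_def add_diff_cancel_left' cscale_cscale left_inverse[OF nz]
        cscale_one)
  ultimately show "D (L j) \<in> SLD_cspan"
    by simp
qed

text \<open>
  Under \<open>D\<close>-invariance, \<open>I + i\<beta>D\<close> acts on the coordinates of \<open>SLD_cspan\<close> by a matrix \<open>M\<close>,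
  injective (hence invertible) because \<open>I + i\<beta>D\<close> is and the SLDs are independent;
  the columns of \<open>M\<^sup>-\<^sup>1\<close> are the coordinates of the \<open>L\<^sup>\<beta>\<^sub>i\<close>.
\<close>

lemma Lb_coordinates_if_D_invariant:
  assumes inv: "D_invariant rho SLD_cspan" and b: "0 \<le> b" "b \<le> 1"
  obtains B M :: "complex^'d^'d"
  where "\<And>i. Lb b i = Lb_comb 0 (column i B)" and "B ** M = mat 1"
proof -
  have "\<forall>j. \<exists>v. D (L j) = Lb_comb 0 v"
    using inv[unfolded D_invariant_SLD_cspan_iff_comm_op_L] unfolding cspan_Lb_eq
    by (simp add: image_iff)
  then obtain Dm where Dm: "\<And>j. D (L j) = Lb_comb 0 (Dm j)"
    by metis
  define M :: "complex^'d^'d"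
    where "M = (\<chi> k j. (if k = j then 1 else 0) + \<i> * of_real b * Dm j $ k)"
  have "column j M = axis j 1 + (\<i> * of_real b) *s Dm j" for j
    by (simp add: M_def column_def vec_eq_iff axis_def)
  then have id_plus_iD_L: "id_plus_iD b (L j) = Lb_comb 0 (column j M)" for j
    by (simp add: Lb_comb_add Lb_comb_scale Lb_comb_axis id_plus_iD_def Dm)
  have id_plus_iD_M: "id_plus_iD b (Lb_comb 0 v) = Lb_comb 0 (M *v v)" for v
    by (simp add: Lb_comb_matrix_vector_mult Lb_comb_def[of 0 v] id_plus_iD_sum_cscale id_plus_iD_L)
  have "M *v v = 0 \<Longrightarrow> v = 0" for v
    using id_plus_iD_M[of v] id_plus_iD_eq_0[OF b] SLD_complex_independent by auto
  then obtain B where BM: "B ** M = mat 1"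
    using matrix_left_invertible_ker by blast
  then have MB: "M ** B = mat 1"
    using matrix_left_right_inverse by blast
  have "Lb b i = Lb_comb 0 (column i B)" for i
    by (rule Lbeta_unique[OF b])
      (simp add: beta_mult_eq_sym_mult_id_plus_iD id_plus_iD_M matrix_vector_mult_column MB
        column_mat_1 Lb_comb_axis sym_mult_SLD)
  with BM show ?thesis
    using that by blast
qed

lemma D_invariant_iff_cspan_Lb_eq:
  "D_invariant rho SLD_cspan \<longleftrightarrow> (\<forall>b\<in>{0..1}. SLD_cspan = cspan (range (Lb b)))"
proof
  assume inv: "D_invariant rho SLD_cspan"
  show "\<forall>b\<in>{0..1}. SLD_cspan = cspan (range (Lb b))"
  proof
    fix b :: real assume "b \<in> {0..1}"
    then obtain B M :: "complex^'d^'d"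
      where B: "\<And>i. Lb b i = Lb_comb 0 (column i B)" and BM: "B ** M = mat 1"
      using Lb_coordinates_if_D_invariant[OF inv] by auto
    have "L j \<in> cspan (range (Lb b))" for j
    proof -
      have "L j = Lb_comb 0 (B *v column j M)"
        by (simp add: matrix_vector_mult_column BM column_mat_1 Lb_comb_axis)
      also have "\<dots> = (\<Sum>i\<in>UNIV. cscale (column j M $ i) (Lb b i))"
        by (simp add: Lb_comb_matrix_vector_mult B)
      finally show ?thesis
        by (simp only:) (intro cspan_lin_comb cspan_base rangeI)
    qed
    moreover have "Lb b i \<in> SLD_cspan" for i
      by (simp add: B cspan_Lb_eq)
    ultimately show "SLD_cspan = cspan (range (Lb b))"
      using cspan_range_subset[of L "Lb b"] cspan_range_subset[of "Lb b" L] by blast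
  qed
next
  assume "\<forall>b\<in>{0..1}. SLD_cspan = cspan (range (Lb b))"
  then have "SLD_cspan = cspan (range (Lb 1))"
    by (rule bspec) simp
  then have "L j \<in> cspan (range (Lb 1))" for j
    using L_in_SLD_cspan by simp
  then show "D_invariant rho SLD_cspan"
    by (rule D_invariant_if_L_in_cspan_Lb[rotated 2]) simp_all
qed

section \<open>The inverse of the \<open>\<beta>\<close>-Fisher information\<close>

definition G :: "real \<Rightarrow> complex^'n^'n \<Rightarrow> complex^'n^'n \<Rightarrow> complex" where
  "G b X Y = hs_inner X (beta_mult b Y)"

abbreviation J :: "real \<Rightarrow> complex^'d^'d" where
  "J b \<equiv> Jbeta b rho dr"

lemma G_sum_cscale_right:
  "G b X (\<Sum>k\<in>UNIV. cscale (c k) (f k)) = (\<Sum>k\<in>UNIV. c k * G b X (f k))"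
  by (simp add: G_def lr_mult_sum lr_mult_cscale hs_inner_sum_right hs_inner_cscale_right)

lemma G_sum_cscale_left:
  "G b (\<Sum>k\<in>UNIV. cscale (c k) (f k)) Y = (\<Sum>k\<in>UNIV. cnj (c k) * G b (f k) Y)"
  by (simp add: G_def hs_inner_sum_left hs_inner_cscale_left)

lemma G_add_left: "G b (X + X') Y = G b X Y + G b X' Y"
  by (simp add: G_def hs_inner_add_left)

lemma G_add_right: "G b X (Y + Y') = G b X Y + G b X Y'"
  by (simp add: G_def hs_inner_add_right lr_mult_add)

lemma G_diff_left: "G b (X - X') Y = G b X Y - G b X' Y"
  by (simp add: G_def hs_inner_diff_left)

lemma G_commute: "G b X Y = cnj (G b Y X)"
  by (simp add: G_def hs_inner_lr_mult_swap flip: hs_inner_commute)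

lemma G_eq_0_imp_0:
  assumes "0 \<le> b" "b \<le> 1" "G b X X = 0"
  shows "X = 0"
proof (rule ccontr)
  assume "X \<noteq> 0"
  then have "0 < Re (G b X X)"
    unfolding G_def using beta_mult_coeffs[OF assms(1,2)] Re_hs_inner_lr_mult_pos by blast
  with assms(3) show False
    by simp
qed

lemma G_Lb_right: "0 \<le> b \<Longrightarrow> b \<le> 1 \<Longrightarrow> G b X (Lb b j) = G 0 X (L j)"
  by (simp add: G_def Lbeta_eq sym_mult_SLD)

lemma Jbeta_nth: "J b $ i $ j = G b (Lb b i) (Lb b j)"
proof -
  have "2 * ((1 + b) / 2) = 1 + b" "2 * ((1 - b) / 2) = 1 - b"
    by simp_all
  then have "(1 + b) *\<^sub>R (rho ** Y) + (1 - b) *\<^sub>R (Y ** rho) = 2 *\<^sub>R beta_mult b Y" for Y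
    unfolding lr_mult_def scaleR_add_right scaleR_scaleR by metis
  then show ?thesis
    by (simp add: Jbeta_def inner_beta_def G_def hs_inner_def matrix_mult_scaleR_right trace_scaleR)
qed

lemma adjoint_Jbeta: "adjoint (J b) = J b"
  by (simp add: vec_eq_iff Jbeta_nth) (metis G_commute)

lemma invertible_Jbeta:
  assumes b: "0 \<le> b" "b \<le> 1"
  shows "invertible (J b)"
proof (rule invertible_if_ker_trivial, clarify)
  fix v assume v: "J b *v v = 0"
  have "G b (Lb b i) (Lb_comb b v) = (J b *v v) $ i" for i
    by (simp add: matrix_vector_mult_def Jbeta_nth Lb_comb_def G_sum_cscale_right mult.commute)
  then have "G b (Lb_comb b v) (Lb_comb b v) = 0"
    using v by (simp add: Lb_comb_def[of b v] G_sum_cscale_left)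
  then show "v = 0"
    using G_eq_0_imp_0 Lb_complex_independent b by blast
qed

lemma invertible_J0: "invertible (J 0)"
  by (rule invertible_Jbeta) simp_all

definition Z :: "complex^'d^'d" where
  "Z = (\<chi> i j. trace (L i ** rho ** L j))"

definition Z_beta :: "real \<Rightarrow> complex^'d^'d" where
  "Z_beta b = Re_mat Z + cscale (complex_of_real b * \<i>) (Im_mat Z)"

lemma G_L_L: "G b (L k) (L l) = Z_beta b $ k $ l"
proof -
  define z where "z = trace (L k ** rho ** L l)"
  have "cnj z = trace (L l ** rho ** L k)"
    by (simp add: z_def flip: trace_adjoint) (simp add: adjoint_mult adjoint_L matrix_mul_assoc)
  also have "\<dots> = trace (L k ** L l ** rho)"
    by (metis trace_mul_sym matrix_mul_assoc)
  finally have "trace (L k ** L l ** rho) = cnj z"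
    by simp
  then have "G b (L k) (L l) = of_real ((1+b)/2) * z + of_real ((1-b)/2) * cnj z"
    by (simp add: G_def hs_inner_def lr_mult_def adjoint_L matrix_add_ldistrib trace_add
        matrix_mult_scaleR_right trace_scaleR matrix_mul_assoc z_def)
  also have "\<dots> = of_real (Re z) + of_real b * \<i> * of_real (Im z)"
    by (simp add: complex_eq_iff field_simps)
  finally show ?thesis
    by (simp add: Z_beta_def Re_mat_def Im_mat_def Z_def z_def)
qed

definition SLD_dual :: "'d \<Rightarrow> complex^'n^'n" where
  "SLD_dual i = Lb_comb 0 (column i (matrix_inv (J 0)))"

definition Lb_dual :: "real \<Rightarrow> 'd \<Rightarrow> complex^'n^'n" where
  "Lb_dual b i = Lb_comb b (column i (matrix_inv (J b)))"

definition Jinv_formula :: "real \<Rightarrow> complex^'d^'d" where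
  "Jinv_formula b = matrix_inv (J 0) ** Z_beta b ** matrix_inv (J 0)"

lemma G_Lb_comb_left: "G b (Lb_comb b' v) Y = (\<Sum>k\<in>UNIV. cnj (v$k) * G b (Lb b' k) Y)"
  unfolding Lb_comb_def by (rule G_sum_cscale_left)

lemma G_Lb_comb_right: "G b X (Lb_comb b' v) = (\<Sum>k\<in>UNIV. v$k * G b X (Lb b' k))"
  unfolding Lb_comb_def by (rule G_sum_cscale_right)

lemma hermitian_nth: "adjoint A = A \<Longrightarrow> cnj (A $ k $ i) = A $ i $ k"
  by (metis adjoint_nth)

lemma G_Lb_dual_Lb:
  assumes "0 \<le> b" "b \<le> 1"
  shows "G b (Lb_dual b i) (Lb b j) = of_bool (i = j)"
proof -
  have herm: "adjoint (matrix_inv (J b)) = matrix_inv (J b)"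
    using adjoint_matrix_inv[OF adjoint_Jbeta invertible_Jbeta[OF assms]] .
  have "G b (Lb_dual b i) (Lb b j) = (\<Sum>k\<in>UNIV. matrix_inv (J b) $ i $ k * J b $ k $ j)"
    by (simp add: Lb_dual_def G_Lb_comb_left column_def hermitian_nth[OF herm] Jbeta_nth)
  also have "\<dots> = (matrix_inv (J b) ** J b) $ i $ j"
    by (simp add: matrix_mult_nth)
  finally show ?thesis
    using matrix_inv_mult[OF invertible_Jbeta[OF assms]] by (simp add: mat_def of_bool_def)
qed

lemma G_SLD_dual_Lb:
  assumes "0 \<le> b" "b \<le> 1"
  shows "G b (SLD_dual i) (Lb b j) = of_bool (i = j)"
  using G_Lb_right[OF assms] G_Lb_dual_Lb[of 0] by (simp add: SLD_dual_def Lb_dual_def)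

lemma G_Lb_dual_Lb_dual:
  "0 \<le> b \<Longrightarrow> b \<le> 1 \<Longrightarrow> G b (Lb_dual b i) (Lb_dual b j) = matrix_inv (J b) $ i $ j"
  by (simp add: Lb_dual_def[of b j] G_Lb_comb_right G_Lb_dual_Lb column_def)

lemma G_SLD_dual_SLD_dual: "G b (SLD_dual i) (SLD_dual j) = Jinv_formula b $ i $ j"
proof -
  let ?K = "matrix_inv (J 0)"
  have herm: "adjoint ?K = ?K"
    using adjoint_matrix_inv[OF adjoint_Jbeta invertible_J0] .
  have "G b (SLD_dual i) (SLD_dual j)
      = (\<Sum>l\<in>UNIV. \<Sum>k\<in>UNIV. ?K $ i $ k * Z_beta b $ k $ l * ?K $ l $ j)"
    by (simp add: SLD_dual_def G_Lb_comb_left G_Lb_comb_right column_def hermitian_nth[OF herm]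
        G_L_L sum_distrib_left mult_ac)
  also have "\<dots> = Jinv_formula b $ i $ j"
    by (simp add: Jinv_formula_def matrix_mult_nth sum_distrib_right)
  finally show ?thesis .
qed

context
  fixes b :: real
  assumes b: "0 \<le> b" "b \<le> 1"
begin

lemma G_dual_gap_Lb_comb: "G b (SLD_dual i - Lb_dual b i) (Lb_comb b v) = 0"
  by (simp add: G_Lb_comb_right G_diff_left G_SLD_dual_Lb[OF b] G_Lb_dual_Lb[OF b])

text \<open>Pythagoras: the gaps between the two dual bases are \<open>G\<^sub>\<beta>\<close>-orthogonal to the \<open>L\<^sup>\<beta>\<^sub>j\<close>.\<close>

lemma Jinv_formula_eq:
  "Jinv_formula b $ i $ j
    = matrix_inv (J b) $ i $ j + G b (SLD_dual i - Lb_dual b i) (SLD_dual j - Lb_dual b j)"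
proof -
  let ?gap = "\<lambda>i. SLD_dual i - Lb_dual b i"
  have orth: "G b (Lb_dual b i) (?gap j) = 0" "G b (?gap i) (Lb_dual b j) = 0"
    using G_dual_gap_Lb_comb G_commute[of b "Lb_dual b i"] unfolding Lb_dual_def by auto
  have "Jinv_formula b $ i $ j = G b (Lb_dual b i + ?gap i) (Lb_dual b j + ?gap j)"
    by (simp add: G_SLD_dual_SLD_dual)
  also have "\<dots> = (G b (Lb_dual b i) (Lb_dual b j) + G b (?gap i) (Lb_dual b j))
      + (G b (Lb_dual b i) (?gap j) + G b (?gap i) (?gap j))"
    by (simp only: G_add_left G_add_right)
  also have "\<dots> = matrix_inv (J b) $ i $ j + G b (?gap i) (?gap j)"
    by (simp only: orth G_Lb_dual_Lb_dual[OF b] add_0_right add_0_left)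
  finally show ?thesis .
qed

lemma dual_gap_eq_0_iff: "SLD_dual i - Lb_dual b i = 0 \<longleftrightarrow> SLD_dual i \<in> cspan (range (Lb b))"
proof
  assume "SLD_dual i \<in> cspan (range (Lb b))"
  then obtain v where "SLD_dual i - Lb_dual b i = Lb_comb b v"
    using cspan_diff[OF _ Lb_comb_in_cspan] cspan_Lb_eq unfolding Lb_dual_def by blast
  then show "SLD_dual i - Lb_dual b i = 0"
    using G_dual_gap_Lb_comb G_eq_0_imp_0[OF b] by metis
qed (auto simp: Lb_dual_def Lb_comb_in_cspan)

lemma Jbeta_inv_eq_Jinv_formula_iff:
  "matrix_inv (J b) = Jinv_formula b \<longleftrightarrow> (\<forall>i. SLD_dual i \<in> cspan (range (Lb b)))"
proof -
  have "matrix_inv (J b) = Jinv_formula b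
      \<longleftrightarrow> (\<forall>i j. G b (SLD_dual i - Lb_dual b i) (SLD_dual j - Lb_dual b j) = 0)"
    by (auto simp: vec_eq_iff Jinv_formula_eq)
  also have "\<dots> \<longleftrightarrow> (\<forall>i. SLD_dual i - Lb_dual b i = 0)"
  proof
    assume "\<forall>i j. G b (SLD_dual i - Lb_dual b i) (SLD_dual j - Lb_dual b j) = 0"
    then show "\<forall>i. SLD_dual i - Lb_dual b i = 0"
      using G_eq_0_imp_0[OF b] by blast
  qed (simp add: G_def)
  finally show ?thesis
    by (simp only: dual_gap_eq_0_iff)
qed

end

lemma L_eq_sum_SLD_dual: "L j = (\<Sum>i\<in>UNIV. cscale (J 0 $ i $ j) (SLD_dual i))"
proof -
  have "L j = Lb_comb 0 (matrix_inv (J 0) *v column j (J 0))"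
    using matrix_inv_mult[OF invertible_J0]
    by (simp add: matrix_vector_mult_column column_mat_1 Lb_comb_axis)
  then show ?thesis
    by (simp add: Lb_comb_matrix_vector_mult SLD_dual_def column_def)
qed

lemma D_invariant_iff_Jbeta_inv_eq:
  "D_invariant rho SLD_cspan \<longleftrightarrow> (\<forall>b\<in>{0..1}. matrix_inv (J b) = Jinv_formula b)"
proof
  assume inv: "D_invariant rho SLD_cspan"
  show "\<forall>b\<in>{0..1}. matrix_inv (J b) = Jinv_formula b"
  proof
    fix b :: real assume b: "b \<in> {0..1}"
    then have "SLD_cspan = cspan (range (Lb b))"
      using inv unfolding D_invariant_iff_cspan_Lb_eq by blast
    moreover have "SLD_dual i \<in> SLD_cspan" for i
      unfolding SLD_dual_def by (rule Lb_comb_in_cspan)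
    ultimately show "matrix_inv (J b) = Jinv_formula b"
      using b by (simp add: Jbeta_inv_eq_Jinv_formula_iff)
  qed
next
  assume "\<forall>b\<in>{0..1}. matrix_inv (J b) = Jinv_formula b"
  then have "matrix_inv (J 1) = Jinv_formula 1"
    by (rule bspec) simp
  then have "SLD_dual i \<in> cspan (range (Lb 1))" for i
    using Jbeta_inv_eq_Jinv_formula_iff[of 1] by simp
  then have "L j \<in> cspan (range (Lb 1))" for j
    unfolding L_eq_sum_SLD_dual by (rule cspan_lin_comb)
  then show "D_invariant rho SLD_cspan"
    by (rule D_invariant_if_L_in_cspan_Lb[rotated 2]) simp_all
qed

end

lemma hermitian_pderiv_op:
  fixes rf :: "real^'d \<Rightarrow> complex^'n^'n"
  assumes "open Theta" "th0 \<in> Theta" "\<forall>th\<in>Theta. hermitian (rf th)" "rf differentiable (at th0)"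
  shows "adjoint (pderiv_op rf th0 i) = pderiv_op rf th0 i"
proof -
  let ?f' = "frechet_derivative rf (at th0)"
  have "linear (adjoint :: complex^'n^'n \<Rightarrow> complex^'n^'n)"
    by (rule linearI) (simp_all add: adjoint_add adjoint_scaleR)
  then have "bounded_linear (adjoint :: complex^'n^'n \<Rightarrow> complex^'n^'n)"
    by (simp add: linear_conv_bounded_linear)
  moreover have deriv: "(rf has_derivative ?f') (at th0)"
    using assms(4) frechet_derivative_works by blast
  ultimately have "((\<lambda>x. adjoint (rf x)) has_derivative (\<lambda>h. adjoint (?f' h))) (at th0)"
    by (rule bounded_linear.has_derivative)
  moreover have "((\<lambda>x. adjoint (rf x)) has_derivative ?f') (at th0)"
    by (rule has_derivative_transform_within_open[OF deriv assms(1,2)])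
       (use assms(3) in \<open>auto simp: hermitian_def\<close>)
  ultimately have "(\<lambda>h. adjoint (?f' h)) = ?f'"
    by (rule has_derivative_unique)
  then show ?thesis
    unfolding pderiv_op_def by metis
qed

theorem lemma11:
  fixes rf :: "real^'d \<Rightarrow> complex^'n^'n"
    and Theta :: "(real^'d) set"
    and th0 :: "real^'d"
  defines "rho \<equiv> rf th0"
    and "dr \<equiv> pderiv_op rf th0"
    and "LS \<equiv> (\<lambda>i. Lbeta 0 (rf th0) (pderiv_op rf th0 i))"
  assumes Theta_open: "open Theta"
    and th0_in: "th0 \<in> Theta"
    and family_density: "\<forall>th\<in>Theta. density_op (rf th)"
    and family_diff: "\<forall>th\<in>Theta. rf differentiable (at th)"
    and rho_pos: "strictly_positive rho"
    and SLD_indep: "\<forall>c::'d \<Rightarrow> real. (\<Sum>i\<in>UNIV. c i *\<^sub>R LS i) = 0 \<longrightarrow> (\<forall>i. c i = 0)"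
  shows
   "(D_invariant rho (span (range dr)) \<longleftrightarrow> D_invariant rho (span (range LS)))
  \<and> (D_invariant rho (span (range dr)) \<longleftrightarrow> D_invariant rho (cspan (range LS)))
  \<and> (D_invariant rho (span (range dr)) \<longleftrightarrow>
       (\<forall>b\<in>{0..1}. cspan (range LS) = cspan (range (\<lambda>i. Lbeta b rho (dr i)))))
  \<and> (D_invariant rho (span (range dr)) \<longleftrightarrow>
       (\<forall>b\<in>{0..1}.
          matrix_inv (Jbeta b rho dr) =
            matrix_inv (Jbeta 0 rho dr)
            ** (Re_mat (\<chi> i j. trace (LS i ** rho ** LS j))
                + cscale (complex_of_real b * \<i>) (Im_mat (\<chi> i j. trace (LS i ** rho ** LS j))))
            ** matrix_inv (Jbeta 0 rho dr)))"
proof -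
  have LS: "LS = (\<lambda>i. Lbeta 0 rho (dr i))"
    unfolding LS_def rho_def dr_def ..
  have "\<forall>th\<in>Theta. hermitian (rf th)"
    using family_density by (simp add: density_op_def)
  then have "adjoint (dr i) = dr i" for i
    unfolding dr_def using hermitian_pderiv_op Theta_open th0_in family_diff by blast
  moreover have "(\<Sum>i\<in>UNIV. c i *\<^sub>R Lbeta 0 rho (dr i)) = 0 \<Longrightarrow> c i = 0" for c i
    using SLD_indep by (simp add: LS)
  ultimately interpret SLD_family rho dr
    using rho_pos by unfold_locales (auto simp: strictly_positive_def)
  show ?thesis
    unfolding LS
    using D_invariant_span_dr_iff D_invariant_SLD_span_iff_SLD_cspan D_invariant_iff_cspan_Lb_eq
      D_invariant_iff_Jbeta_inv_eq[unfolded Jinv_formula_def Z_beta_def Z_def]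
    by blast
qed

end
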